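(* Let $\mathcal{H}$ be an index set of estimation tasks, let $S_{\text{def}}$ be a random "defining" dataset with realization $s$, and for each $h\in\mathcal{H}$ let $\theta_h$ be an unknown real target estimand, $\hat\theta_h=\hat\theta_h(s)$ an estimate computed from $S_{\text{def}}$, and $e_h=e_h(s)\in\mathbb{R}$ an (unknown) error measuring proximity between $\hat\theta_h$ and $\theta_h$. Let $\mathcal{E}(s):=\{(h,\hat\theta_h(s),\theta_h,e_h(s)) : h\in\mathcal{H}\}$. Given $S_{\text{def}}=s$, let $S_{\text{err}}$ be an "error estimation" dataset drawn from a distribution $\mathcal{D}$ (which may depend on $s$). Suppose there are functions $\hat u(S_{\text{err}},h,\lambda)\in\mathbb{R}$ such that for every $h\in\mathcal{H}$ and every $\lambda\in(0,1)$, $$\Pr_{S_{\text{err}}\sim\mathcal{D}}\big(\hat u(S_{\text{err}},h,\lambda)\ge e_h \,\big|\, \mathcal{E}(s)\big)\ge 1-\lambda .$$ Define $\hat\xi(S_{\text{err}},\delta):=\max_{h\in\mathcal{H}}\hat u(S_{\text{err}},h,\delta)$. Then for every $\delta\in(0,1)$, $$\Pr_{S_{\text{err}}\sim\mathcal{D}}\Big(\hat\xi(S_{\text{err}},\delta)\ge \max_{h\in\mathcal{H}} e_h \,\Big|\, \mathcal{E}(s)\Big)\ge 1-\delta \quad\text{and}\quad \Pr_{(S_{\text{def}},S_{\text{err}})}\Big(\hat\xi(S_{\text{err}},\delta)\ge \max_{h\in\mathcal{H}} e_h\Big)\ge 1-\delta .$$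
   Context: Here $\max_{h\in\mathcal{H}}$ denotes a maximum over the class (assumed to be attained, e.g. when $\mathcal{H}$ is finite). Conditioning on $\mathcal{E}(s)$ means conditioning on the realization $S_{\text{def}}=s$, so that all estimates, estimands and errors are fixed with respect to the randomness of $S_{\text{err}}$; $S_{\text{err}}$ is a fresh or held-out dataset not used to construct any $\hat\theta_h$. *)

theory Defs
  imports "HOL-Probability.Probability"
begin

text \<open>Maximum over the task class H (used only where the maximum is assumed attained).\<close>
definition hmax :: "'h set \<Rightarrow> ('h \<Rightarrow> real) \<Rightarrow> real" where
  "hmax H f = (SUP h\<in>H. f h)"

text \<open>Joint law of (S_def, S_err): S_def ~ P, then S_err ~ D s given S_def = s.\<close>
definition joint_law :: "'s measure \<Rightarrow> 'x measure \<Rightarrow> ('s \<Rightarrow> 'x measure) \<Rightarrow> ('s \<times> 'x) measure" where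
  "joint_law P X D = P \<bind> (\<lambda>s. distr (D s) (P \<Otimes>\<^sub>M X) (\<lambda>x. (s, x)))"

end

theory Submission
  imports Defs
begin

text \<open>Only the task maximising the true error has to be covered: if the upper bound for that
  single task holds, the maximum of the upper bounds dominates the maximal error. Hence the
  confidence level 1 - \<delta> passes from the individual bounds to the maximum without a union
  bound, and averaging the conditional statement over the defining dataset gives the
  unconditional one.\<close>

lemma hmax_eq_maximum:
  assumes "h \<in> H" "\<forall>h'\<in>H. f h' \<le> f h"
  shows "hmax H f = f h"
  unfolding hmax_def by (rule cSup_eq_maximum) (use assms in auto)

lemma le_hmax:
  assumes "h \<in> H" "\<exists>k\<in>H. \<forall>h'\<in>H. f h' \<le> f k"
  shows "f h \<le> hmax H f"
  unfolding hmax_def by (rule cSUP_upper) (use assms in \<open>auto simp: bdd_above_def\<close>)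

lemma hmax_le_hmax_at_maximiser:
  assumes "h \<in> H" "\<forall>h'\<in>H. g h' \<le> g h"
    and "\<exists>k\<in>H. \<forall>h'\<in>H. f h' \<le> f k"
    and "g h \<le> f h"
  shows "hmax H g \<le> hmax H f"
  using assms hmax_eq_maximum[of h H g] le_hmax[of h H f] by simp

lemma measure_hmax_ge_of_maximiser:
  assumes M: "prob_space M"
    and h: "h \<in> H" "\<forall>h'\<in>H. g h' \<le> g h"
    and f_attained: "\<forall>x\<in>space M. \<exists>k\<in>H. \<forall>h'\<in>H. f x h' \<le> f x k"
    and sets: "{x\<in>space M. hmax H g \<le> hmax H (f x)} \<in> sets M"
    and cover: "c \<le> measure M {x\<in>space M. g h \<le> f x h}"
  shows "c \<le> measure M {x\<in>space M. hmax H g \<le> hmax H (f x)}"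
proof -
  have "{x\<in>space M. g h \<le> f x h} \<subseteq> {x\<in>space M. hmax H g \<le> hmax H (f x)}"
    using h f_attained hmax_le_hmax_at_maximiser[of h H g] by blast
  then show ?thesis
    using cover prob_space.finite_measure[OF M] sets
    by (meson finite_measure.finite_measure_mono order_trans)
qed

lemma measure_bind_ge:
  assumes M: "M \<in> space (prob_algebra N)"
    and K: "K \<in> N \<rightarrow>\<^sub>M prob_algebra L"
    and B: "B \<in> sets L"
    and bound: "\<And>x. x \<in> space N \<Longrightarrow> c \<le> measure (K x) B"
  shows "c \<le> measure (M \<bind> K) B"
proof -
  interpret MK: prob_space "M \<bind> K" by (rule prob_space_bind'[OF M K])
  have K_finite: "emeasure (K x) B = ennreal (measure (K x) B)" if "x \<in> space N" for x
    using measurable_space[OF K that]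
    by (simp add: space_prob_algebra finite_measure.emeasure_eq_measure prob_space.finite_measure)
  have M_prob: "prob_space M" and M_sets: "sets M = sets N"
    using M by (auto simp: space_prob_algebra)
  have "(\<integral>\<^sup>+x. ennreal c \<partial>M) \<le> (\<integral>\<^sup>+x. emeasure (K x) B \<partial>M)"
    using bound K_finite
    by (intro nn_integral_mono) (simp add: sets_eq_imp_space_eq[OF M_sets])
  also have "\<dots> = emeasure (M \<bind> K) B"
    by (rule emeasure_bind_prob_algebra[OF M K B, symmetric])
  finally have "ennreal c \<le> ennreal (measure (M \<bind> K) B)"
    by (simp add: prob_space.emeasure_space_1[OF M_prob] MK.emeasure_eq_measure)
  then show ?thesis
    by (cases "c \<le> 0") auto
qed

lemma joint_law_measure_ge:
  assumes P: "prob_space P"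
    and D: "D \<in> P \<rightarrow>\<^sub>M prob_algebra X"
    and A: "A \<in> sets (P \<Otimes>\<^sub>M X)"
    and bound: "\<And>s. s \<in> space P \<Longrightarrow> c \<le> measure (D s) (Pair s -` A)"
  shows "c \<le> measure (joint_law P X D) A"
  unfolding joint_law_def
proof (rule measure_bind_ge[OF _ _ A])
  show "P \<in> space (prob_algebra P)"
    using P by (simp add: space_prob_algebra)
  show "(\<lambda>s. distr (D s) (P \<Otimes>\<^sub>M X) (Pair s)) \<in> P \<rightarrow>\<^sub>M prob_algebra (P \<Otimes>\<^sub>M X)"
    using D by measurable
next
  fix s assume s: "s \<in> space P"
  then have D_sets: "sets (D s) = sets X"
    using measurable_space[OF D s] by (simp add: space_prob_algebra)
  have Pair_meas: "Pair s \<in> D s \<rightarrow>\<^sub>M P \<Otimes>\<^sub>M X"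
    using measurable_Pair1'[OF s] by (simp cong: measurable_cong_sets[OF D_sets refl])
  have "Pair s -` A \<inter> space (D s) = Pair s -` A"
    using sets.sets_into_space[OF sets_Pair1[OF A]] sets_eq_imp_space_eq[OF D_sets] by auto
  then show "c \<le> measure (distr (D s) (P \<Otimes>\<^sub>M X) (Pair s)) A"
    using bound[OF s] by (simp add: measure_distr[OF Pair_meas A])
qed

theorem theorem2p2:
  fixes P :: "'s measure" and X :: "'x measure" and D :: "'s \<Rightarrow> 'x measure"
    and H :: "'h set" and e :: "'s \<Rightarrow> 'h \<Rightarrow> real"
    and u :: "'s \<Rightarrow> 'x \<Rightarrow> 'h \<Rightarrow> real \<Rightarrow> real" and \<delta> :: real
  assumes P: "prob_space P"
    and D: "D \<in> measurable P (prob_algebra X)"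
    and e_attained: "\<forall>s\<in>space P. \<exists>h\<in>H. \<forall>h'\<in>H. e s h' \<le> e s h"
    and u_attained: "\<forall>s\<in>space P. \<forall>x\<in>space X. \<forall>l\<in>{0<..<1}. \<exists>h\<in>H. \<forall>h'\<in>H. u s x h' l \<le> u s x h l"
    and cover: "\<forall>s\<in>space P. \<forall>h\<in>H. \<forall>l\<in>{0<..<1}.
                 measure (D s) {x\<in>space (D s). u s x h l \<ge> e s h} \<ge> 1 - l"
    and meas: "{p\<in>space (P \<Otimes>\<^sub>M X). hmax H (\<lambda>h. u (fst p) (snd p) h \<delta>) \<ge> hmax H (e (fst p))}
                 \<in> sets (P \<Otimes>\<^sub>M X)"
    and delta: "0 < \<delta>" "\<delta> < 1"
  shows "(\<forall>s\<in>space P. measure (D s) {x\<in>space (D s). hmax H (\<lambda>h. u s x h \<delta>) \<ge> hmax H (e s)} \<ge> 1 - \<delta>)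
       \<and> measure (joint_law P X D)
           {p\<in>space (P \<Otimes>\<^sub>M X). hmax H (\<lambda>h. u (fst p) (snd p) h \<delta>) \<ge> hmax H (e (fst p))} \<ge> 1 - \<delta>"
proof -
  define A where "A = {p\<in>space (P \<Otimes>\<^sub>M X). hmax H (\<lambda>h. u (fst p) (snd p) h \<delta>) \<ge> hmax H (e (fst p))}"
  have D_s: "prob_space (D s)" "space (D s) = space X" "sets (D s) = sets X" if s: "s \<in> space P" for s
    using measurable_space[OF D s] sets_eq_imp_space_eq[of "D s" X] by (auto simp: space_prob_algebra)
  have sections: "{x\<in>space (D s). hmax H (\<lambda>h. u s x h \<delta>) \<ge> hmax H (e s)} = Pair s -` A"
    if s: "s \<in> space P" for s
    using s D_s(2)[OF s] by (auto simp: A_def space_pair_measure)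
  have conditional: "1 - \<delta> \<le> measure (D s) {x\<in>space (D s). hmax H (\<lambda>h. u s x h \<delta>) \<ge> hmax H (e s)}"
    if s: "s \<in> space P" for s
  proof -
    obtain h where h: "h \<in> H" "\<forall>h'\<in>H. e s h' \<le> e s h"
      using e_attained s by blast
    show ?thesis
    proof (rule measure_hmax_ge_of_maximiser[OF D_s(1)[OF s] h])
      show "\<forall>x\<in>space (D s). \<exists>k\<in>H. \<forall>h'\<in>H. u s x h' \<delta> \<le> u s x k \<delta>"
        using u_attained s delta D_s(2)[OF s] by simp
      show "{x\<in>space (D s). hmax H (e s) \<le> hmax H (\<lambda>h. u s x h \<delta>)} \<in> sets (D s)"
        using sections[OF s] sets_Pair1[OF meas[folded A_def]] D_s(3)[OF s] by simp
      show "1 - \<delta> \<le> measure (D s) {x\<in>space (D s). e s h \<le> u s x h \<delta>}"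
        using cover s h(1) delta by simp
    qed
  qed
  moreover have "1 - \<delta> \<le> measure (joint_law P X D) A"
    using joint_law_measure_ge[OF P D meas[folded A_def]] conditional sections by simp
  ultimately show ?thesis
    unfolding A_def by simp
qed

end
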